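(* Consider a smoothed network coordination game on a graph $G=(V,E)$ with $n=|V|$, $m=|E|$, maximum degree $\Delta(G)$, and $k$ actions per player, where every payoff entry $A_{uv}(i,j)$ ($uv\in E$, $i,j\in[k]$) is drawn independently from a distribution with density $f_{uv,i,j}:[-1,1]\to[0,\phi]$. Then the expected maximum number of steps of better-response dynamics (over all initial profiles and all better-response sequences) is $O(k^{4\Delta(G)+6}nm^2\phi)$.
   Context: A network coordination game is given by an undirected graph $G=(V,E)$ whose vertices are players; each player chooses one of $k$ actions, and for each edge $uv\in E$ there is a $k\times k$ payoff matrix $A_{uv}$ (with $A_{vu}=A_{uv}^\top$). In profile $\sigma$, player $u$'s payoff is $\sum_{v:\,uv\in E}A_{uv}(\sigma_u,\sigma_v)$. A better-response step is a unilateral change of action by one player that strictly increases her payoff; a pure Nash equilibrium is a profile with no such step. *)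

theory Defs
  imports "HOL-Probability.Probability"
begin

text \<open>For an edge {u,v} with u < v,
  the payoff matrix A_uv is stored as the entries A (u,v,i,j); the matrix
  A_vu is its transpose.\<close>

definition simple_graph :: "nat \<Rightarrow> nat set set \<Rightarrow> bool" where
  "simple_graph n E \<longleftrightarrow> (\<forall>e\<in>E. e \<subseteq> {..<n} \<and> card e = 2)"

definition max_degree :: "nat \<Rightarrow> nat set set \<Rightarrow> nat" where
  "max_degree n E = Max (insert 0 ((\<lambda>v. card {e\<in>E. v \<in> e}) ` {..<n}))"

text \<open>Index set of the independent random payoff entries.\<close>
definition entry_index :: "nat set set \<Rightarrow> nat \<Rightarrow> (nat \<times> nat \<times> nat \<times> nat) set" where
  "entry_index E k = {(u,v,i,j). u < v \<and> {u,v} \<in> E \<and> i < k \<and> j < k}"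

definition edge_payoff :: "(nat \<times> nat \<times> nat \<times> nat \<Rightarrow> real) \<Rightarrow> nat \<Rightarrow> nat \<Rightarrow> nat \<Rightarrow> nat \<Rightarrow> real" where
  "edge_payoff A u v i j = (if u < v then A (u,v,i,j) else A (v,u,j,i))"

definition payoff :: "nat set set \<Rightarrow> (nat \<times> nat \<times> nat \<times> nat \<Rightarrow> real) \<Rightarrow> (nat \<Rightarrow> nat) \<Rightarrow> nat \<Rightarrow> real" where
  "payoff E A \<sigma> u = (\<Sum>v\<in>{v. {u,v} \<in> E}. edge_payoff A u v (\<sigma> u) (\<sigma> v))"

definition profiles :: "nat \<Rightarrow> nat \<Rightarrow> (nat \<Rightarrow> nat) set" where
  "profiles n k = ({..<n} \<rightarrow>\<^sub>E {..<k})"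

definition br_step :: "nat \<Rightarrow> nat \<Rightarrow> nat set set \<Rightarrow> (nat \<times> nat \<times> nat \<times> nat \<Rightarrow> real)
    \<Rightarrow> (nat \<Rightarrow> nat) \<Rightarrow> (nat \<Rightarrow> nat) \<Rightarrow> bool" where
  "br_step n k E A \<sigma> \<sigma>' \<longleftrightarrow>
     (\<exists>u<n. \<exists>a<k. \<sigma>' = \<sigma>(u := a) \<and> payoff E A \<sigma> u < payoff E A \<sigma>' u)"

text \<open>Better-response sequences: lists of profiles sigma_0, ..., sigma_t (t steps).\<close>
definition br_seq :: "nat \<Rightarrow> nat \<Rightarrow> nat set set \<Rightarrow> (nat \<times> nat \<times> nat \<times> nat \<Rightarrow> real)
    \<Rightarrow> (nat \<Rightarrow> nat) list \<Rightarrow> bool" where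
  "br_seq n k E A xs \<longleftrightarrow> xs \<noteq> [] \<and> hd xs \<in> profiles n k \<and>
     (\<forall>i. Suc i < length xs \<longrightarrow> br_step n k E A (xs ! i) (xs ! Suc i))"

definition max_br_steps :: "nat \<Rightarrow> nat \<Rightarrow> nat set set \<Rightarrow> (nat \<times> nat \<times> nat \<times> nat \<Rightarrow> real) \<Rightarrow> ennreal" where
  "max_br_steps n k E A = (SUP xs\<in>{xs. br_seq n k E A xs}. ennreal (real (length xs - 1)))"

end

theory Submission
  imports Defs "HOL-Analysis.Harmonic_Numbers"
begin

text \<open>The game has the exact potential \<open>\<Phi>(\<sigma>) = \<Sum>\<^sub>u\<^sub>v A\<^sub>u\<^sub>v(\<sigma>\<^sub>u, \<sigma>\<^sub>v)\<close>, which almost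
  surely lies in \<open>[-m, m]\<close>. Along a better-response sequence of length \<open>L\<close> the potential
  strictly increases, so the profiles are distinct on the vertices covered by edges, whence
  \<open>L \<le> k\<^sup>2\<^sup>m\<close>, and some step increases \<open>\<Phi>\<close> by at most \<open>2m/L\<close>. The increase of a step is the gain
  of a move \<open>(u, i, a, \<tau>)\<close>: player \<open>u\<close> switches from \<open>i\<close> to \<open>a\<close> while her neighbours play
  \<open>\<tau>\<close>. For a fixed move the gain is a translate of the single entry \<open>A\<^sub>u\<^sub>v(a, \<tau>\<^sub>v)\<close>, so it lies
  in \<open>(0, \<epsilon>]\<close> with probability at most \<open>\<phi>\<epsilon>\<close>. Hence \<open>L\<close> is bounded by the number of pairs
  \<open>(t, move)\<close> with \<open>t \<le> k\<^sup>2\<^sup>m\<close> whose gain lies in \<open>(0, 2m/t]\<close>, whose expectation is at most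
  \<open>n k\<^sup>\<Delta>\<^sup>+\<^sup>2 \<phi> 2m H(k\<^sup>2\<^sup>m) = O(k\<^sup>\<Delta>\<^sup>+\<^sup>3 n m\<^sup>2 \<phi>)\<close>.\<close>

subsection \<open>Simple graphs\<close>

definition neighbours :: "nat set set \<Rightarrow> nat \<Rightarrow> nat set" where
  "neighbours E u = {v. {u,v} \<in> E}"

lemma simple_graph_edgeD:
  assumes "simple_graph n E" "{u,v} \<in> E"
  shows "u \<noteq> v" "u < n" "v < n"
proof -
  have "{u,v} \<subseteq> {..<n}" "card {u,v} = 2"
    using assms unfolding simple_graph_def by auto
  then show "u \<noteq> v" "u < n" "v < n" by (auto split: if_splits)
qed

lemma simple_graph_edge_cases:
  assumes "simple_graph n E" "e \<in> E"
  obtains u v where "e = {u,v}" "u < v"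
proof -
  have "card e = 2" using assms unfolding simple_graph_def by simp
  then obtain x y where "e = {x,y}" "x \<noteq> y" unfolding card_2_iff by blast
  then show thesis
    using that[of x y] that[of y x] by (cases "x < y") (auto simp: insert_commute)
qed

lemma simple_graph_finite: "simple_graph n E \<Longrightarrow> finite E"
  unfolding simple_graph_def by (rule finite_subset[of _ "Pow {..<n}"]) auto

lemma card_Union_simple_graph: "simple_graph n E \<Longrightarrow> card (\<Union>E) \<le> 2 * card E"
  using card_Union_le_sum_card[of E] by (simp add: simple_graph_def)

lemma neighbours_subset: "simple_graph n E \<Longrightarrow> neighbours E u \<subseteq> {..<n}"
  unfolding neighbours_def using simple_graph_edgeD(3) by auto

lemma finite_neighbours: "simple_graph n E \<Longrightarrow> finite (neighbours E u)"
  using finite_subset[OF neighbours_subset] by blast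

lemma not_in_neighbours: "simple_graph n E \<Longrightarrow> u \<notin> neighbours E u"
  unfolding neighbours_def using simple_graph_edgeD(1)[of n E u u] by auto

lemma edges_at_vertex:
  assumes "simple_graph n E"
  shows "{e\<in>E. u \<in> e} = (\<lambda>v. {u,v}) ` neighbours E u"
    and "inj_on (\<lambda>v. {u,v}) (neighbours E u)"
proof -
  show "{e\<in>E. u \<in> e} = (\<lambda>v. {u,v}) ` neighbours E u"
  proof
    show "{e\<in>E. u \<in> e} \<subseteq> (\<lambda>v. {u,v}) ` neighbours E u"
    proof
      fix e assume e: "e \<in> {e\<in>E. u \<in> e}"
      then obtain x y where xy: "e = {x,y}" using simple_graph_edge_cases[OF assms] by blast
      then have "e = {u,x} \<or> e = {u,y}" using e by auto
      with e show "e \<in> (\<lambda>v. {u,v}) ` neighbours E u"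
        unfolding neighbours_def by auto
    qed
  qed (auto simp: neighbours_def)
  show "inj_on (\<lambda>v. {u,v}) (neighbours E u)"
    using not_in_neighbours[OF assms] by (auto simp: inj_on_def doubleton_eq_iff)
qed

lemma card_neighbours_le_max_degree:
  assumes sg: "simple_graph n E" and u: "u < n"
  shows "card (neighbours E u) \<le> max_degree n E"
proof -
  have "card (neighbours E u) = card {e\<in>E. u \<in> e}"
    using edges_at_vertex[OF sg] by (simp add: card_image)
  also have "\<dots> \<le> max_degree n E"
    unfolding max_degree_def using u by (intro Max_ge) (auto simp: simple_graph_finite[OF sg])
  finally show ?thesis .
qed

subsection \<open>The potential\<close>

definition entry_of :: "nat \<Rightarrow> nat \<Rightarrow> nat \<Rightarrow> nat \<Rightarrow> nat \<times> nat \<times> nat \<times> nat" where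
  "entry_of u v i j = (if u < v then (u,v,i,j) else (v,u,j,i))"

lemma edge_payoff_entry_of: "edge_payoff A u v i j = A (entry_of u v i j)"
  by (simp add: edge_payoff_def entry_of_def)

lemma entry_of_in_entry_index:
  assumes "simple_graph n E" "{u,v} \<in> E" "i < k" "j < k"
  shows "entry_of u v i j \<in> entry_index E k"
proof (cases "u < v")
  case False
  then have "v < u" using simple_graph_edgeD(1)[OF assms(1,2)] by simp
  moreover have "{v,u} \<in> E" using assms(2) by (simp add: insert_commute)
  ultimately show ?thesis using assms(3,4) by (simp add: entry_of_def entry_index_def)
qed (use assms in \<open>simp add: entry_of_def entry_index_def\<close>)

lemma entry_of_eqD:
  "u \<noteq> v \<Longrightarrow> u \<noteq> v' \<Longrightarrow> entry_of u v i j = entry_of u v' i' j' \<Longrightarrow> v = v' \<and> i = i'"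
  unfolding entry_of_def by (auto split: if_splits)

lemma finite_entry_index:
  assumes "simple_graph n E" shows "finite (entry_index E k)"
proof (rule finite_subset)
  show "entry_index E k \<subseteq> {..<n} \<times> {..<n} \<times> {..<k} \<times> {..<k}"
    unfolding entry_index_def using simple_graph_edgeD(2,3)[OF assms] by auto
qed simp

lemma entry_index_nonempty:
  assumes "simple_graph n E" "E \<noteq> {}" "1 \<le> k"
  shows "entry_index E k \<noteq> {}"
proof -
  obtain e where "e \<in> E" using assms(2) by blast
  then obtain u v where "e = {u,v}" "u < v" using simple_graph_edge_cases[OF assms(1)] by blast
  then have "(u,v,0,0) \<in> entry_index E k" using \<open>e \<in> E\<close> assms(3) by (simp add: entry_index_def)
  then show ?thesis by blast
qed

definition edge_potential :: "(nat \<times> nat \<times> nat \<times> nat \<Rightarrow> real) \<Rightarrow> nat set \<Rightarrow> (nat \<Rightarrow> nat) \<Rightarrow> real" where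
  "edge_potential A e \<sigma> = edge_payoff A (Min e) (Max e) (\<sigma> (Min e)) (\<sigma> (Max e))"

definition potential :: "nat set set \<Rightarrow> (nat \<times> nat \<times> nat \<times> nat \<Rightarrow> real) \<Rightarrow> (nat \<Rightarrow> nat) \<Rightarrow> real" where
  "potential E A \<sigma> = (\<Sum>e\<in>E. edge_potential A e \<sigma>)"

lemma edge_potential_doubleton:
  assumes "u \<noteq> v"
  shows "edge_potential A {u,v} \<sigma> = edge_payoff A u v (\<sigma> u) (\<sigma> v)"
proof (cases "u < v")
  case True
  then have "Min {u,v} = u" "Max {u,v} = v" by auto
  then show ?thesis by (simp add: edge_potential_def)
next
  case False
  with assms have "Min {u,v} = v" "Max {u,v} = u" by auto
  then show ?thesis using assms by (simp add: edge_potential_def edge_payoff_def)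
qed

lemma edge_potential_cong:
  "e \<noteq> {} \<Longrightarrow> finite e \<Longrightarrow> (\<And>v. v \<in> e \<Longrightarrow> \<sigma> v = \<sigma>' v)
    \<Longrightarrow> edge_potential A e \<sigma> = edge_potential A e \<sigma>'"
  unfolding edge_potential_def by simp

lemma potential_split:
  assumes sg: "simple_graph n E"
  shows "potential E A \<sigma> = (\<Sum>e\<in>{e\<in>E. u \<notin> e}. edge_potential A e \<sigma>) + payoff E A \<sigma> u"
proof -
  have "E = {e\<in>E. u \<notin> e} \<union> {e\<in>E. u \<in> e}" by auto
  then have "potential E A \<sigma>
      = (\<Sum>e\<in>{e\<in>E. u \<notin> e}. edge_potential A e \<sigma>) + (\<Sum>e\<in>{e\<in>E. u \<in> e}. edge_potential A e \<sigma>)"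
    unfolding potential_def using simple_graph_finite[OF sg]
    by (metis (no_types, lifting) sum.union_disjoint disjoint_iff finite_Un mem_Collect_eq)
  also have "(\<Sum>e\<in>{e\<in>E. u \<in> e}. edge_potential A e \<sigma>) = (\<Sum>v\<in>neighbours E u. edge_potential A {u,v} \<sigma>)"
    using edges_at_vertex[OF sg] by (simp add: sum.reindex)
  also have "\<dots> = payoff E A \<sigma> u"
    unfolding payoff_def neighbours_def[symmetric] using not_in_neighbours[OF sg, of u]
    by (intro sum.cong refl edge_potential_doubleton) auto
  finally show ?thesis .
qed

lemma potential_fun_upd:
  assumes sg: "simple_graph n E"
  shows "potential E A (\<sigma>(u := a)) - potential E A \<sigma> = payoff E A (\<sigma>(u := a)) u - payoff E A \<sigma> u"
proof -
  have "(\<Sum>e\<in>{e\<in>E. u \<notin> e}. edge_potential A e (\<sigma>(u := a))) = (\<Sum>e\<in>{e\<in>E. u \<notin> e}. edge_potential A e \<sigma>)"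
  proof (intro sum.cong refl)
    fix e assume e: "e \<in> {e\<in>E. u \<notin> e}"
    then obtain x y where "e = {x,y}" using simple_graph_edge_cases[OF sg] by blast
    with e show "edge_potential A e (\<sigma>(u := a)) = edge_potential A e \<sigma>"
      by (intro edge_potential_cong) auto
  qed
  then show ?thesis
    using potential_split[OF sg, of A "\<sigma>(u := a)" u] potential_split[OF sg, of A \<sigma> u] by linarith
qed

lemma potential_restrict:
  assumes sg: "simple_graph n E"
  shows "potential E A (restrict \<sigma> (\<Union>E)) = potential E A \<sigma>"
  unfolding potential_def
proof (intro sum.cong refl)
  fix e assume e: "e \<in> E"
  then obtain x y where "e = {x,y}" using simple_graph_edge_cases[OF sg] by blast
  with e show "edge_potential A e (restrict \<sigma> (\<Union>E)) = edge_potential A e \<sigma>"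
    by (intro edge_potential_cong) auto
qed

lemma abs_potential_le:
  assumes sg: "simple_graph n E" and \<sigma>: "\<sigma> \<in> profiles n k"
    and A: "\<forall>x\<in>entry_index E k. \<bar>A x\<bar> \<le> 1"
  shows "\<bar>potential E A \<sigma>\<bar> \<le> card E"
proof -
  have "\<bar>edge_potential A e \<sigma>\<bar> \<le> 1" if e: "e \<in> E" for e
  proof -
    obtain u v where uv: "e = {u,v}" "u < v" using simple_graph_edge_cases[OF sg e] by blast
    have "\<sigma> u < k" "\<sigma> v < k"
      using simple_graph_edgeD[OF sg] e uv \<sigma> by (auto simp: profiles_def)
    then have "entry_of u v (\<sigma> u) (\<sigma> v) \<in> entry_index E k"
      using entry_of_in_entry_index[OF sg] e uv by simp
    then show ?thesis
      using A uv by (simp add: edge_potential_doubleton edge_payoff_entry_of)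
  qed
  then have "\<bar>potential E A \<sigma>\<bar> \<le> (\<Sum>e\<in>E. 1)"
    unfolding potential_def by (intro order.trans[OF sum_abs] sum_mono)
  then show ?thesis by simp
qed

subsection \<open>Better-response sequences\<close>

text \<open>A move \<open>(u, i, a, \<tau>)\<close>: player \<open>u\<close> switches from \<open>i\<close> to \<open>a\<close> while her neighbours play \<open>\<tau>\<close>.\<close>
definition moves :: "nat \<Rightarrow> nat \<Rightarrow> nat set set \<Rightarrow> (nat \<times> nat \<times> nat \<times> (nat \<Rightarrow> nat)) set" where
  "moves n k E = {(u,i,a,\<tau>). u < n \<and> i < k \<and> a < k \<and> i \<noteq> a \<and> \<tau> \<in> neighbours E u \<rightarrow>\<^sub>E {..<k}}"

definition move_gain :: "nat set set \<Rightarrow> (nat \<times> nat \<times> nat \<times> nat \<Rightarrow> real) \<Rightarrow> nat \<times> nat \<times> nat \<times> (nat \<Rightarrow> nat) \<Rightarrow> real" where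
  "move_gain E A = (\<lambda>(u,i,a,\<tau>). \<Sum>v\<in>neighbours E u. A (entry_of u v a (\<tau> v)) - A (entry_of u v i (\<tau> v)))"

lemma payoff_fun_upd_diff:
  assumes "simple_graph n E"
  shows "payoff E A (\<sigma>(u := a)) u - payoff E A \<sigma> u = move_gain E A (u, \<sigma> u, a, restrict \<sigma> (neighbours E u))"
  unfolding payoff_def move_gain_def neighbours_def[symmetric] edge_payoff_entry_of
  using not_in_neighbours[OF assms, of u] by (auto simp: sum_subtractf[symmetric] intro!: sum.cong)

lemma moves_subset:
  "moves n k E \<subseteq> (SIGMA u:{..<n}. {..<k} \<times> {..<k} \<times> (neighbours E u \<rightarrow>\<^sub>E {..<k}))"
  unfolding moves_def by auto

lemma finite_moves: "simple_graph n E \<Longrightarrow> finite (moves n k E)"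
  by (rule finite_subset[OF moves_subset]) (auto intro!: finite_PiE finite_neighbours)

lemma card_moves_le:
  assumes sg: "simple_graph n E" and k: "1 \<le> k"
  shows "card (moves n k E) \<le> n * k ^ (max_degree n E + 2)"
proof -
  let ?D = "max_degree n E"
  have "card (moves n k E) \<le> card (SIGMA u:{..<n}. {..<k} \<times> {..<k} \<times> (neighbours E u \<rightarrow>\<^sub>E {..<k}))"
    by (rule card_mono[OF _ moves_subset]) (auto intro!: finite_PiE finite_neighbours[OF sg])
  also have "\<dots> = (\<Sum>u<n. k * k * k ^ card (neighbours E u))"
    by (simp add: card_SigmaI finite_PiE finite_neighbours[OF sg] card_cartesian_product card_PiE mult.assoc)
  also have "\<dots> \<le> (\<Sum>u<n. k * k * k ^ ?D)"
    using k card_neighbours_le_max_degree[OF sg] by (intro sum_mono mult_left_mono power_increasing) auto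
  also have "\<dots> = n * k ^ (?D + 2)" by (simp add: power_add power2_eq_square)
  finally show ?thesis .
qed

lemma br_step_profiles: "br_step n k E A \<sigma> \<sigma>' \<Longrightarrow> \<sigma> \<in> profiles n k \<Longrightarrow> \<sigma>' \<in> profiles n k"
  unfolding br_step_def profiles_def by (auto simp: PiE_iff extensional_def)

lemma br_seq_nth_profiles:
  assumes "br_seq n k E A xs" "i < length xs"
  shows "xs ! i \<in> profiles n k"
  using assms(2)
proof (induction i)
  case 0 then show ?case using assms(1) hd_conv_nth[of xs] by (simp add: br_seq_def)
next
  case (Suc i)
  then show ?case
    using assms(1) br_step_profiles[of n k E A "xs ! i" "xs ! Suc i"] by (simp add: br_seq_def)
qed

lemma br_step_potential_increase:
  assumes sg: "simple_graph n E" and step: "br_step n k E A \<sigma> \<sigma>'" and \<sigma>: "\<sigma> \<in> profiles n k"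
  obtains s where "s \<in> moves n k E" "potential E A \<sigma>' - potential E A \<sigma> = move_gain E A s" "0 < move_gain E A s"
proof -
  from step obtain u a where ua: "u < n" "a < k" "\<sigma>' = \<sigma>(u := a)" "payoff E A \<sigma> u < payoff E A \<sigma>' u"
    unfolding br_step_def by blast
  then have "\<sigma> u \<noteq> a" by auto
  moreover have "\<sigma> u < k" "restrict \<sigma> (neighbours E u) \<in> neighbours E u \<rightarrow>\<^sub>E {..<k}"
    using \<sigma> ua neighbours_subset[OF sg, of u] by (auto simp: profiles_def)
  ultimately have "(u, \<sigma> u, a, restrict \<sigma> (neighbours E u)) \<in> moves n k E"
    using ua by (simp add: moves_def)
  then show thesis
    using that ua potential_fun_upd[OF sg, of A \<sigma> u a] payoff_fun_upd_diff[OF sg, of A \<sigma> u a] by simp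
qed

lemma br_seq_potential_less:
  assumes sg: "simple_graph n E" and xs: "br_seq n k E A xs"
  shows "i < j \<Longrightarrow> j < length xs \<Longrightarrow> potential E A (xs ! i) < potential E A (xs ! j)"
proof (induction j)
  case (Suc j)
  have "br_step n k E A (xs ! j) (xs ! Suc j)" using Suc.prems xs by (simp add: br_seq_def)
  then have "potential E A (xs ! j) < potential E A (xs ! Suc j)"
    using br_step_potential_increase[OF sg _ br_seq_nth_profiles[OF xs]] Suc.prems by force
  then show ?case using Suc by (cases "i = j") auto
qed simp

text \<open>The potential only depends on the actions of the at most \<open>2m\<close> vertices covered by edges,
  and it strictly increases along the sequence.\<close>
lemma br_seq_length_le:
  assumes sg: "simple_graph n E" and xs: "br_seq n k E A xs" and k: "1 \<le> k"
  shows "length xs \<le> k ^ (2 * card E)"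
proof -
  let ?P = "\<Union>E \<rightarrow>\<^sub>E {..<k}"
  have UE: "\<Union>E \<subseteq> {..<n}" using sg unfolding simple_graph_def by auto
  then have finU: "finite (\<Union>E)" using finite_subset by blast
  have "inj_on (\<lambda>i. potential E A (xs ! i)) {..<length xs}"
    using br_seq_potential_less[OF sg xs] by (intro linorder_inj_onI) (metis lessThan_iff less_irrefl, linarith)
  moreover have "(\<lambda>i. potential E A (xs ! i)) ` {..<length xs} \<subseteq> potential E A ` ?P"
  proof (rule image_subsetI)
    fix i assume "i \<in> {..<length xs}"
    then have "restrict (xs ! i) (\<Union>E) \<in> ?P"
      using br_seq_nth_profiles[OF xs] UE by (auto simp: profiles_def)
    then show "potential E A (xs ! i) \<in> potential E A ` ?P"
      using potential_restrict[OF sg] by (metis image_eqI)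
  qed
  ultimately have "length xs \<le> card (potential E A ` ?P)"
    using card_inj_on_le finU by (metis card_lessThan finite_PiE finite_imageI finite_lessThan)
  also have "\<dots> \<le> card ?P" by (rule card_image_le) (simp add: finU finite_PiE)
  also have "\<dots> = k ^ card (\<Union>E)" using finU by (simp add: card_PiE)
  also have "\<dots> \<le> k ^ (2 * card E)" using k card_Union_simple_graph[OF sg] by (intro power_increasing)
  finally show ?thesis .
qed

lemma obtain_le_average:
  fixes d :: "nat \<Rightarrow> real"
  assumes "0 < L" "(\<Sum>j<L. d j) \<le> C"
  obtains j where "j < L" "d j \<le> C / L"
proof -
  have "\<exists>j<L. d j \<le> C / L"
  proof (rule ccontr)
    assume "\<not> ?thesis"
    then have "(\<Sum>j<L. C / L) < (\<Sum>j<L. d j)"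
      using assms(1) by (intro sum_strict_mono) auto
    then show False using assms by simp
  qed
  with that show thesis by blast
qed

text \<open>The gains of the \<open>L\<close> steps telescope to a total of at most \<open>2m\<close>.\<close>
lemma br_seq_small_gain:
  assumes sg: "simple_graph n E" and xs: "br_seq n k E A xs"
    and A: "\<forall>x\<in>entry_index E k. \<bar>A x\<bar> \<le> 1" and L: "2 \<le> length xs"
  obtains s where "s \<in> moves n k E" "0 < move_gain E A s"
    "move_gain E A s \<le> 2 * real (card E) / real (length xs - 1)"
proof -
  let ?L = "length xs - 1"
  let ?d = "\<lambda>j. potential E A (xs ! Suc j) - potential E A (xs ! j)"
  have "(\<Sum>j<?L. ?d j) = potential E A (xs ! ?L) - potential E A (xs ! 0)"
    by (rule sum_lessThan_telescope)
  also have "\<dots> \<le> 2 * real (card E)"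
  proof -
    have "?L < length xs" "0 < length xs" using L by auto
    then have "\<bar>potential E A (xs ! ?L)\<bar> \<le> card E" "\<bar>potential E A (xs ! 0)\<bar> \<le> card E"
      using abs_potential_le[OF sg br_seq_nth_profiles[OF xs] A] by blast+
    then show ?thesis by linarith
  qed
  finally have sum_le: "(\<Sum>j<?L. ?d j) \<le> 2 * real (card E)" .
  have "0 < ?L" using L by simp
  then obtain j where j: "j < ?L" "?d j \<le> 2 * real (card E) / real ?L"
    using obtain_le_average[OF _ sum_le] by blast
  have "br_step n k E A (xs ! j) (xs ! Suc j)" using j xs by (simp add: br_seq_def)
  moreover have "xs ! j \<in> profiles n k" using br_seq_nth_profiles[OF xs] j by simp
  ultimately obtain s where "s \<in> moves n k E" "?d j = move_gain E A s" "0 < move_gain E A s"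
    using br_step_potential_increase[OF sg] by blast
  with j that show thesis by simp
qed

text \<open>A sequence with \<open>L\<close> steps has a move whose gain lies in \<open>(0, 2m/t]\<close> for every \<open>t \<le> L\<close>,
  so \<open>L\<close> is at most the number of pairs \<open>(t, s)\<close> counted here.\<close>
definition small_gain_count :: "nat \<Rightarrow> nat \<Rightarrow> nat set set \<Rightarrow> (nat \<times> nat \<times> nat \<times> nat \<Rightarrow> real) \<Rightarrow> ennreal" where
  "small_gain_count n k E A = (\<Sum>t\<in>{1..k ^ (2 * card E)}. \<Sum>s\<in>moves n k E.
      indicator {0<..2 * real (card E) / real t} (move_gain E A s))"

lemma br_seq_steps_le_small_gain_count:
  assumes sg: "simple_graph n E" and k: "1 \<le> k" and A: "\<forall>x\<in>entry_index E k. \<bar>A x\<bar> \<le> 1"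
    and xs: "br_seq n k E A xs"
  shows "ennreal (real (length xs - 1)) \<le> small_gain_count n k E A"
proof (cases "2 \<le> length xs")
  case True
  let ?L = "length xs - 1"
  let ?c = "\<lambda>t::nat. 2 * real (card E) / real t"
  let ?count = "\<lambda>t. \<Sum>s\<in>moves n k E. indicator {0<..?c t} (move_gain E A s) :: ennreal"
  obtain s where s: "s \<in> moves n k E" "0 < move_gain E A s" "move_gain E A s \<le> ?c ?L"
    using br_seq_small_gain[OF sg xs A True] by blast
  have "1 \<le> ?count t" if t: "t \<in> {1..?L}" for t
  proof -
    have "?c ?L \<le> ?c t" using t by (intro divide_left_mono) auto
    then have "1 = (indicator {0<..?c t} (move_gain E A s) :: ennreal)" using s by auto
    also have "\<dots> \<le> ?count t" by (rule member_le_sum[OF s(1)]) (auto simp: finite_moves[OF sg])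
    finally show ?thesis .
  qed
  then have "ennreal (real ?L) \<le> (\<Sum>t\<in>{1..?L}. ?count t)"
    using sum_mono[of "{1..?L}" "\<lambda>_. 1 :: ennreal"] by (simp add: ennreal_of_nat_eq_real_of_nat)
  also have "\<dots> \<le> (\<Sum>t\<in>{1..k ^ (2 * card E)}. ?count t)"
    using br_seq_length_le[OF sg xs k] by (intro sum_mono2) auto
  finally show ?thesis unfolding small_gain_count_def .
qed simp

lemma max_br_steps_le_small_gain_count:
  assumes "simple_graph n E" "1 \<le> k" "\<forall>x\<in>entry_index E k. \<bar>A x\<bar> \<le> 1"
  shows "max_br_steps n k E A \<le> small_gain_count n k E A"
  unfolding max_br_steps_def using br_seq_steps_le_small_gain_count[OF assms] by (auto intro: SUP_least)

lemma max_br_steps_trivial: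
  assumes "k = 0 \<or> E = {}"
  shows "max_br_steps n k E A = 0"
proof -
  have "\<not> br_step n k E A \<sigma> \<sigma>'" for \<sigma> \<sigma>'
    using assms unfolding br_step_def payoff_def by auto
  then have "length xs \<le> 1" if "br_seq n k E A xs" for xs
    using that unfolding br_seq_def by (metis One_nat_def Suc_lessI less_one not_le)
  then show ?thesis unfolding max_br_steps_def by (auto intro!: antisym SUP_least)
qed

subsection \<open>Smoothed payoffs\<close>

lemma nn_integral_density_indicator_interval_le:
  fixes g :: "real \<Rightarrow> real"
  assumes "g \<in> borel_measurable lborel" "\<And>x. 0 \<le> g x" "\<And>x. g x \<le> \<phi>" "0 \<le> \<epsilon>"
  shows "(\<integral>\<^sup>+ y. indicator {0<..\<epsilon>} (y + c) \<partial>density lborel (\<lambda>x. ennreal (g x))) \<le> ennreal (\<phi> * \<epsilon>)"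
proof -
  have "0 \<le> \<phi>" using assms(2,3) order.trans by blast
  have shift: "indicator {0<..\<epsilon>} (y + c) = (indicator {-c<..\<epsilon>-c} y :: ennreal)" for y
    by (auto simp: indicator_def)
  have "(\<integral>\<^sup>+ y. indicator {0<..\<epsilon>} (y + c) \<partial>density lborel (\<lambda>x. ennreal (g x)))
      = (\<integral>\<^sup>+ y. ennreal (g y) * indicator {-c<..\<epsilon>-c} y \<partial>lborel)"
    unfolding shift using assms(1) by (subst nn_integral_density) auto
  also have "\<dots> \<le> (\<integral>\<^sup>+ y. ennreal \<phi> * indicator {-c<..\<epsilon>-c} y \<partial>lborel)"
    using assms(3) by (intro nn_integral_mono mult_right_mono) (auto intro: ennreal_leI)
  also have "\<dots> = ennreal (\<phi> * \<epsilon>)"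
    using \<open>0 \<le> \<phi>\<close> assms(4) by (simp add: nn_integral_cmult_indicator ennreal_mult)
  finally show ?thesis .
qed

text \<open>Integrating out the coordinate \<open>j\<close> first (Fubini) leaves the \<open>M j\<close>-measure of a translate of \<open>B\<close>.\<close>
lemma nn_integral_PiM_indicator_translate_le:
  fixes M :: "'i \<Rightarrow> real measure" and G :: "('i \<Rightarrow> real) \<Rightarrow> real"
  assumes prob: "\<And>i. i \<in> I \<Longrightarrow> prob_space (M i)" and fin: "finite I" and j: "j \<in> I"
    and G: "G \<in> borel_measurable (PiM I M)" and B: "B \<in> sets borel"
    and translate: "\<And>x y. G (x(j := y)) = y + G (x(j := 0))"
    and bound: "\<And>c. (\<integral>\<^sup>+ y. indicator B (y + c) \<partial>M j) \<le> r"
  shows "(\<integral>\<^sup>+ x. indicator B (G x) \<partial>PiM I M) \<le> r"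
proof -
  define N where "N i = (if i \<in> I then M i else M j)" for i
  have PiM_N: "PiM J N = PiM J M" if "J \<subseteq> I" for J
    using that by (intro PiM_cong) (auto simp: N_def)
  interpret product_sigma_finite N
    unfolding product_sigma_finite_def N_def using prob j by (auto intro: prob_space_imp_sigma_finite)
  interpret rest: prob_space "PiM (I - {j}) M"
    using prob by (intro prob_space_PiM) auto
  have I: "insert j (I - {j}) = I" using j by auto
  have "(\<lambda>x. indicator B (G x) :: ennreal) \<in> borel_measurable (PiM (insert j (I - {j})) N)"
    unfolding I PiM_N[OF order_refl] using G B by measurable
  then have "(\<integral>\<^sup>+ x. indicator B (G x) \<partial>PiM (insert j (I - {j})) N)
      = (\<integral>\<^sup>+ x. (\<integral>\<^sup>+ y. indicator B (G (x(j := y))) \<partial>N j) \<partial>PiM (I - {j}) N)"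
    using fin by (intro product_nn_integral_insert) auto
  then have "(\<integral>\<^sup>+ x. indicator B (G x) \<partial>PiM I M)
      = (\<integral>\<^sup>+ x. (\<integral>\<^sup>+ y. indicator B (G (x(j := y))) \<partial>M j) \<partial>PiM (I - {j}) M)"
    unfolding I PiM_N[OF order_refl] PiM_N[OF Diff_subset] using j by (simp add: N_def)
  also have "\<dots> = (\<integral>\<^sup>+ x. (\<integral>\<^sup>+ y. indicator B (y + G (x(j := 0))) \<partial>M j) \<partial>PiM (I - {j}) M)"
    by (subst translate) simp
  also have "\<dots> \<le> (\<integral>\<^sup>+ x. r \<partial>PiM (I - {j}) M)"
    using bound by (rule nn_integral_mono)
  also have "\<dots> = r" by (simp add: rest.emeasure_space_1)
  finally show ?thesis .
qed

lemma measurable_move_gain: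
  assumes sg: "simple_graph n E" and s: "s \<in> moves n k E"
    and sets_M: "\<And>e. e \<in> entry_index E k \<Longrightarrow> sets (M e) = sets borel"
  shows "(\<lambda>A. move_gain E A s) \<in> borel_measurable (PiM (entry_index E k) M)"
proof -
  have entry: "(\<lambda>A. A e) \<in> borel_measurable (PiM (entry_index E k) M)" if "e \<in> entry_index E k" for e
    using measurable_component_singleton[OF that, of M] sets_M[OF that] by (simp cong: measurable_cong_sets)
  obtain u i a \<tau> where "s = (u,i,a,\<tau>)" "i < k" "a < k" "\<tau> \<in> neighbours E u \<rightarrow>\<^sub>E {..<k}"
    using s unfolding moves_def by auto
  then show ?thesis
    unfolding move_gain_def neighbours_def
    by (auto intro!: borel_measurable_sum borel_measurable_diff entry entry_of_in_entry_index[OF sg])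
qed

text \<open>Only the entry \<open>A\<^sub>u\<^sub>v(a, \<tau>\<^sub>v)\<close> of the move's target action against one fixed neighbour \<open>v\<close>
  is varied; no other summand of the gain contains it, since \<open>i \<noteq> a\<close> and \<open>entry_of\<close> is injective.\<close>
lemma move_gain_fun_upd:
  fixes A :: "nat \<times> nat \<times> nat \<times> nat \<Rightarrow> real" and \<tau> :: "nat \<Rightarrow> nat"
  assumes sg: "simple_graph n E" and ia: "i \<noteq> a" and v: "v \<in> neighbours E u"
  defines "e \<equiv> entry_of u v a (\<tau> v)"
  shows "move_gain E (A(e := y)) (u,i,a,\<tau>) = y + move_gain E (A(e := 0)) (u,i,a,\<tau>)"
proof -
  have ne: "u \<noteq> w" if "w \<in> neighbours E u" for w
    using not_in_neighbours[OF sg, of u] that by auto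
  define T where "T A w = A (entry_of u w a (\<tau> w)) - A (entry_of u w i (\<tau> w))" for A :: "_ \<Rightarrow> real" and w
  have split: "move_gain E A (u,i,a,\<tau>) = T A v + (\<Sum>w\<in>neighbours E u - {v}. T A w)" for A
    unfolding move_gain_def T_def using sum.remove[OF finite_neighbours[OF sg] v] by simp
  have "T (A(e := z)) w = T A w" if "w \<in> neighbours E u - {v}" for w z
    using entry_of_eqD[OF ne ne[OF v], of w] that v unfolding T_def e_def by auto
  then have others: "(\<Sum>w\<in>neighbours E u - {v}. T (A(e := z)) w) = (\<Sum>w\<in>neighbours E u - {v}. T A w)" for z
    by (intro sum.cong) auto
  have "T (A(e := z)) v = z - A (entry_of u v i (\<tau> v))" for z
    using entry_of_eqD[OF ne[OF v] ne[OF v]] ia unfolding T_def e_def by auto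
  then show ?thesis unfolding split others by simp
qed

lemma harm_power_le: "1 \<le> k \<Longrightarrow> (harm (k ^ j) :: real) \<le> 1 + real j * real k"
proof -
  assume k: "1 \<le> k"
  have "harm (k ^ j) - ln (real (k ^ j)) \<le> harm 1 - ln (real (1::nat))"
    using euler_mascheroni_sequence_decreasing[of 1 "k ^ j"] k by simp
  then have "harm (k ^ j) \<le> 1 + real j * ln (real k)" by (simp add: harm_def ln_realpow)
  also have "\<dots> \<le> 1 + real j * real k"
    using ln_le_minus_one[of "real k"] k by (intro add_left_mono mult_left_mono) auto
  finally show ?thesis .
qed

locale smoothed_coordination_game =
  fixes n k :: nat and E :: "nat set set" and f :: "nat \<times> nat \<times> nat \<times> nat \<Rightarrow> real \<Rightarrow> real" and \<phi> :: real
  assumes simple_graph: "simple_graph n E"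
    and densities: "\<forall>e\<in>entry_index E k.
        f e \<in> borel_measurable lborel \<and>
        (\<forall>x. 0 \<le> f e x \<and> f e x \<le> \<phi>) \<and>
        (\<forall>x. x \<notin> {-1..1} \<longrightarrow> f e x = 0) \<and>
        prob_space (density lborel (\<lambda>x. ennreal (f e x)))"
begin

abbreviation payoff_measure :: "(nat \<times> nat \<times> nat \<times> nat \<Rightarrow> real) measure" where
  "payoff_measure \<equiv> PiM (entry_index E k) (\<lambda>e. density lborel (\<lambda>x. ennreal (f e x)))"

lemma
  assumes "e \<in> entry_index E k"
  shows density_measurable: "f e \<in> borel_measurable lborel"
    and density_nonneg: "0 \<le> f e x"
    and density_le_phi: "f e x \<le> \<phi>"
    and density_outside: "x \<notin> {-1..1} \<Longrightarrow> f e x = 0"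
    and prob_space_density: "prob_space (density lborel (\<lambda>x. ennreal (f e x)))"
  using densities assms by auto

lemma phi_nonneg: "1 \<le> k \<Longrightarrow> E \<noteq> {} \<Longrightarrow> 0 \<le> \<phi>"
  using entry_index_nonempty[OF simple_graph] density_nonneg density_le_phi by (meson ex_in_conv order.trans)

lemma AE_abs_entries_le_1: "AE A in payoff_measure. \<forall>x\<in>entry_index E k. \<bar>A x\<bar> \<le> 1"
proof (intro eventually_ball_finite finite_entry_index[OF simple_graph] ballI)
  fix e assume e: "e \<in> entry_index E k"
  have "x \<in> {-1..1}" if "0 < f e x" for x
    using density_outside[OF e, of x] that by auto
  then have "AE x in density lborel (\<lambda>x. ennreal (f e x)). \<bar>x\<bar> \<le> 1"
    using density_measurable[OF e] by (subst AE_density) (auto simp: abs_le_iff)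
  then show "AE A in payoff_measure. \<bar>A e\<bar> \<le> 1"
    using prob_space_density e by (intro AE_PiM_component) auto
qed

lemma measurable_move_gain_indicator:
  assumes "s \<in> moves n k E"
  shows "(\<lambda>A. indicator {0<..\<epsilon>} (move_gain E A s) :: ennreal) \<in> borel_measurable payoff_measure"
proof -
  have "(\<lambda>A. move_gain E A s) \<in> borel_measurable payoff_measure"
    by (rule measurable_move_gain[OF simple_graph assms]) simp
  then show ?thesis
    using borel_measurable_indicator[of "{0<..\<epsilon>}" borel] by (simp add: measurable_compose)
qed

lemma move_gain_prob_le:
  assumes s: "s \<in> moves n k E" and \<epsilon>: "0 \<le> \<epsilon>"
  shows "(\<integral>\<^sup>+ A. indicator {0<..\<epsilon>} (move_gain E A s) \<partial>payoff_measure) \<le> ennreal (\<phi> * \<epsilon>)"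
proof -
  obtain u i a \<tau> where s': "s = (u,i,a,\<tau>)" "i \<noteq> a" "a < k" "\<tau> \<in> neighbours E u \<rightarrow>\<^sub>E {..<k}"
    using s unfolding moves_def by auto
  show ?thesis
  proof (cases "neighbours E u = {}")
    case True
    then show ?thesis using s' by (simp add: move_gain_def)
  next
    case False
    then obtain v where v: "v \<in> neighbours E u" by blast
    let ?e = "entry_of u v a (\<tau> v)"
    have e: "?e \<in> entry_index E k"
      using v s' by (intro entry_of_in_entry_index[OF simple_graph]) (auto simp: neighbours_def)
    show ?thesis
      unfolding s'(1)
    proof (rule nn_integral_PiM_indicator_translate_le[where j = ?e])
      show "(\<lambda>A. move_gain E A (u,i,a,\<tau>)) \<in> borel_measurable payoff_measure"
        using measurable_move_gain[OF simple_graph s] s' by simp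
      show "move_gain E (A(?e := y)) (u,i,a,\<tau>) = y + move_gain E (A(?e := 0)) (u,i,a,\<tau>)" for A y
        by (rule move_gain_fun_upd[OF simple_graph s'(2) v])
      show "(\<integral>\<^sup>+ y. indicator {0<..\<epsilon>} (y + c) \<partial>density lborel (\<lambda>x. ennreal (f ?e x))) \<le> ennreal (\<phi> * \<epsilon>)"
        for c using e \<epsilon> by (intro nn_integral_density_indicator_interval_le density_measurable
            density_nonneg density_le_phi)
    qed (use e prob_space_density finite_entry_index[OF simple_graph] in auto)
  qed
qed

lemma nn_integral_max_br_steps_le:
  assumes k: "1 \<le> k" and E: "E \<noteq> {}"
  shows "(\<integral>\<^sup>+ A. max_br_steps n k E A \<partial>payoff_measure)
    \<le> ennreal (card (moves n k E) * \<phi> * (2 * card E) * harm (k ^ (2 * card E)))"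
proof -
  let ?K = "k ^ (2 * card E)" and ?c = "\<lambda>t::nat. 2 * real (card E) / real t"
  have "(\<integral>\<^sup>+ A. max_br_steps n k E A \<partial>payoff_measure) \<le> (\<integral>\<^sup>+ A. small_gain_count n k E A \<partial>payoff_measure)"
    using AE_abs_entries_le_1
    by (intro nn_integral_mono_AE) (auto elim!: eventually_mono intro: max_br_steps_le_small_gain_count[OF simple_graph k])
  also have "\<dots> = (\<Sum>t\<in>{1..?K}. \<Sum>s\<in>moves n k E. \<integral>\<^sup>+ A. indicator {0<..?c t} (move_gain E A s) \<partial>payoff_measure)"
    unfolding small_gain_count_def using measurable_move_gain_indicator
    by (subst nn_integral_sum) (auto intro!: borel_measurable_sum sum.cong nn_integral_sum)
  also have "\<dots> \<le> (\<Sum>t\<in>{1..?K}. \<Sum>s\<in>moves n k E. ennreal (\<phi> * ?c t))"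
    by (intro sum_mono move_gain_prob_le) auto
  also have "\<dots> = ennreal (\<Sum>t\<in>{1..?K}. \<Sum>s\<in>moves n k E. \<phi> * ?c t)"
    using phi_nonneg[OF k E]
    by (subst sum_ennreal[symmetric], simp, intro sum.cong refl sum_ennreal) auto
  also have "(\<Sum>t\<in>{1..?K}. \<Sum>s\<in>moves n k E. \<phi> * ?c t) = card (moves n k E) * \<phi> * (2 * card E) * harm ?K"
    by (simp add: harm_def sum_distrib_left divide_inverse mult_ac)
  finally show ?thesis .
qed

lemma nn_integral_max_br_steps_le_degree_bound:
  assumes k: "1 \<le> k" and E: "E \<noteq> {}"
  shows "(\<integral>\<^sup>+ A. max_br_steps n k E A \<partial>payoff_measure)
    \<le> ennreal (6 * real k ^ (max_degree n E + 3) * real n * real (card E) ^ 2 * \<phi>)"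
proof -
  let ?m = "real (card E)" and ?D = "max_degree n E"
  have m: "1 \<le> ?m" using E simple_graph_finite[OF simple_graph] by (simp add: Suc_le_eq card_gt_0_iff)
  have "harm (k ^ (2 * card E)) \<le> 1 + 2 * ?m * real k" using harm_power_le[OF k, of "2 * card E"] by simp
  also have "\<dots> \<le> 3 * ?m * real k" using mult_mono[OF m, of 1 "real k"] k by (simp add: mult.commute)
  finally have H: "harm (k ^ (2 * card E)) \<le> 3 * ?m * real k" .
  have S: "real (card (moves n k E)) \<le> real n * real k ^ (?D + 2)"
    using card_moves_le[OF simple_graph k] by (metis of_nat_le_iff of_nat_mult of_nat_power)
  have "card (moves n k E) * \<phi> * (2 * ?m) * harm (k ^ (2 * card E))
      \<le> (real n * real k ^ (?D + 2)) * \<phi> * (2 * ?m) * (3 * ?m * real k)"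
    using S H phi_nonneg[OF k E] m by (intro mult_mono) (auto intro: harm_nonneg)
  also have "\<dots> = 6 * real k ^ (?D + 3) * real n * ?m ^ 2 * \<phi>"
    by (simp add: power2_eq_square power_add algebra_simps numeral_3_eq_3)
  finally show ?thesis using nn_integral_max_br_steps_le[OF k E] by (simp add: order.trans ennreal_leI)
qed

end

theorem mainTheorem13:
  "\<exists>C>0. \<forall>(n::nat) (k::nat) (E::nat set set) (f::nat \<times> nat \<times> nat \<times> nat \<Rightarrow> real \<Rightarrow> real) (\<phi>::real).
     simple_graph n E \<longrightarrow>
     (\<forall>e\<in>entry_index E k.
        f e \<in> borel_measurable lborel \<and>
        (\<forall>x. 0 \<le> f e x \<and> f e x \<le> \<phi>) \<and>
        (\<forall>x. x \<notin> {-1..1} \<longrightarrow> f e x = 0) \<and>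
        prob_space (density lborel (\<lambda>x. ennreal (f e x)))) \<longrightarrow>
     (\<integral>\<^sup>+ A. max_br_steps n k E A
        \<partial>(PiM (entry_index E k) (\<lambda>e. density lborel (\<lambda>x. ennreal (f e x)))))
       \<le> ennreal (C * real k ^ (4 * max_degree n E + 6) * real n * real (card E) ^ 2 * \<phi>)"
proof (intro exI[of _ 6] conjI allI impI)
  show "(0::real) < 6" by simp
  fix n k :: nat and E :: "nat set set" and f :: "nat \<times> nat \<times> nat \<times> nat \<Rightarrow> real \<Rightarrow> real" and \<phi> :: real
  assume "simple_graph n E" and "\<forall>e\<in>entry_index E k.
        f e \<in> borel_measurable lborel \<and> (\<forall>x. 0 \<le> f e x \<and> f e x \<le> \<phi>) \<and>
        (\<forall>x. x \<notin> {-1..1} \<longrightarrow> f e x = 0) \<and> prob_space (density lborel (\<lambda>x. ennreal (f e x)))"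
  then interpret smoothed_coordination_game n k E f \<phi> by unfold_locales
  let ?D = "max_degree n E"
  show "(\<integral>\<^sup>+ A. max_br_steps n k E A \<partial>payoff_measure)
      \<le> ennreal (6 * real k ^ (4 * ?D + 6) * real n * real (card E) ^ 2 * \<phi>)"
  proof (cases "k = 0 \<or> E = {}")
    case True
    then show ?thesis by (simp add: max_br_steps_trivial)
  next
    case False
    then have k: "1 \<le> k" and E: "E \<noteq> {}" by auto
    have "real k ^ (?D + 3) \<le> real k ^ (4 * ?D + 6)" using k by (intro power_increasing) auto
    then have "6 * real k ^ (?D + 3) * real n * real (card E) ^ 2 * \<phi>
        \<le> 6 * real k ^ (4 * ?D + 6) * real n * real (card E) ^ 2 * \<phi>"
      using phi_nonneg[OF k E] by (intro mult_right_mono) auto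
    then show ?thesis
      using nn_integral_max_br_steps_le_degree_bound[OF k E] by (simp add: order.trans ennreal_leI)
  qed
qed
end
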